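(* Define $\tau,\tau^<\colon\mathbb{D}([0,\infty),\mathbb{R})\to[0,\infty]$ by $\tau(f)=\inf\{t\ge0\colon f(t)\le0\}$ and $\tau^<(f)=\inf\{t\ge0\colon f(t)<0\}$. Let $C([0,\infty),\mathbb{R})$ be the set of continuous $f\in\mathbb{D}([0,\infty),\mathbb{R})$ and $$\mathbb{D}^*([0,\infty),\mathbb{R})=\big\{f\in\mathbb{D}([0,\infty),\mathbb{R})\colon f(t)\le0\ \forall t\ge\tau(f),\ \tau^<(f)=\tau(f)<\infty\big\}.$$ If $f_n\to f$ in $\mathbb{D}([0,\infty),\mathbb{R})$ (Skorokhod topology) and $f\in C([0,\infty),\mathbb{R})\cap\mathbb{D}^*([0,\infty),\mathbb{R})$, then $\tau(f_n)\to\tau(f)$.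
   Context: $\mathbb{D}([0,\infty),\mathbb{R})$ is the space of càdlàg functions $[0,\infty)\to\mathbb{R}$ with the Skorokhod ($J_1$) topology, $\inf\varnothing=\infty$. *)

theory Defs
  imports "HOL-Analysis.Analysis" "HOL-Library.Extended_Real"
begin

text \<open>Paths are functions real => real; only their values on [0,oo) matter.\<close>

definition cadlag :: "(real \<Rightarrow> real) \<Rightarrow> bool" where
  "cadlag f \<longleftrightarrow>
     (\<forall>t\<ge>0. continuous (at_right t) f) \<and>
     (\<forall>t>0. \<exists>l. (f \<longlongrightarrow> l) (at_left t))"

definition time_change :: "(real \<Rightarrow> real) \<Rightarrow> bool" where
  "time_change g \<longleftrightarrow>
     strict_mono_on {0..} g \<and> continuous_on {0..} g \<and> bij_betw g {0..} {0..}"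

text \<open>Convergence in the Skorokhod J1 topology on D([0,oo),R)
  (Ethier--Kurtz, Prop. 3.5.3): there are time changes lambda_n with
  sup_{t<=T} |lambda_n t - t| -> 0 and sup_{t<=T} |f_n (lambda_n t) - f t| -> 0
  for every T (stated as uniform convergence on [0,T]).\<close>
definition skorokhod_conv :: "(nat \<Rightarrow> real \<Rightarrow> real) \<Rightarrow> (real \<Rightarrow> real) \<Rightarrow> bool" where
  "skorokhod_conv fs f \<longleftrightarrow>
     (\<forall>n. cadlag (fs n)) \<and> cadlag f \<and>
     (\<exists>lam. (\<forall>n. time_change (lam n)) \<and>
        (\<forall>T\<ge>0. \<forall>e>0. \<forall>\<^sub>F n in sequentially.
            (\<forall>t\<in>{0..T}. \<bar>lam n t - t\<bar> < e \<and> \<bar>fs n (lam n t) - f t\<bar> < e)))"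

definition tau :: "(real \<Rightarrow> real) \<Rightarrow> ereal" where
  "tau f = Inf {ereal t | t. t \<ge> 0 \<and> f t \<le> 0}"

definition tau_lt :: "(real \<Rightarrow> real) \<Rightarrow> ereal" where
  "tau_lt f = Inf {ereal t | t. t \<ge> 0 \<and> f t < 0}"

definition D_star :: "(real \<Rightarrow> real) set" where
  "D_star = {f. cadlag f \<and> (\<forall>t\<ge>0. ereal t \<ge> tau f \<longrightarrow> f t \<le> 0) \<and>
                tau_lt f = tau f \<and> tau f < \<infinity>}"

end

theory Submission
  imports Defs
begin

text \<open>Along the time changes \<open>\<lambda>\<^sub>n\<close>, \<open>f\<^sub>n \<circ> \<lambda>\<^sub>n\<close> converges to \<open>f\<close> uniformly on compacts.
  A point \<open>t\<^sub>1\<close> with \<open>f t\<^sub>1 < 0\<close> therefore gives \<open>f\<^sub>n (\<lambda>\<^sub>n t\<^sub>1) < 0\<close> eventually, so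
  \<open>limsup \<tau>(f\<^sub>n) \<le> \<tau>\<^sup><(f)\<close>. Conversely, before \<open>\<tau>(f)\<close> a continuous \<open>f\<close> is bounded away
  from \<open>0\<close> on every compact interval \<open>[0,m]\<close>, hence so is \<open>f\<^sub>n\<close> on \<open>[0,\<lambda>\<^sub>n m]\<close>, which gives
  \<open>liminf \<tau>(f\<^sub>n) \<ge> \<tau>(f)\<close>. On \<open>D\<^sup>*\<close> the two hitting times agree.\<close>

lemma tau_nonneg: "0 \<le> tau g"
  unfolding tau_def by (rule Inf_greatest) auto

lemma tau_le: "0 \<le> t \<Longrightarrow> g t \<le> 0 \<Longrightarrow> tau g \<le> ereal t"
  unfolding tau_def by (rule Inf_lower) auto

lemma tau_ge:
  assumes "\<And>s. 0 \<le> s \<Longrightarrow> s < t \<Longrightarrow> 0 < g s"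
  shows "ereal t \<le> tau g"
  unfolding tau_def
proof (rule Inf_greatest)
  fix x assume "x \<in> {ereal s |s. 0 \<le> s \<and> g s \<le> 0}"
  then obtain s where "x = ereal s" "0 \<le> s" "g s \<le> 0" by auto
  with assms show "ereal t \<le> x" by force
qed

lemma pos_before_tau: "0 \<le> t \<Longrightarrow> ereal t < tau g \<Longrightarrow> 0 < g t"
  using tau_le[of t g] by force

lemma tau_lt_less_iff: "tau_lt g < ereal r \<longleftrightarrow> (\<exists>t. 0 \<le> t \<and> g t < 0 \<and> t < r)"
  unfolding tau_lt_def Inf_less_iff by auto

lemma time_change_nonneg: "time_change g \<Longrightarrow> 0 \<le> t \<Longrightarrow> 0 \<le> g t"
  unfolding time_change_def bij_betw_def by auto

lemma time_change_preimage_below: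
  assumes g: "time_change g" and "0 \<le> s" "0 \<le> m" "s < g m"
  shows "\<exists>t. 0 \<le> t \<and> t < m \<and> s = g t"
proof -
  from assms g obtain t where t: "0 \<le> t" "s = g t"
    unfolding time_change_def bij_betw_def by (metis atLeast_iff imageE)
  have "t < m"
  proof (rule ccontr)
    assume "\<not> t < m"
    then have "g m \<le> g t"
      using g \<open>0 \<le> m\<close> unfolding time_change_def by (auto intro: strict_mono_on_leD)
    with t \<open>s < g m\<close> show False by simp
  qed
  with t show ?thesis by blast
qed

lemma continuous_pos_bounded_below:
  fixes f :: "'a::topological_space \<Rightarrow> real"
  assumes "compact S" "continuous_on S f" "\<And>x. x \<in> S \<Longrightarrow> 0 < f x"
  shows "\<exists>d>0. \<forall>x\<in>S. d \<le> f x"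
proof (cases "S = {}")
  case False
  then obtain x0 where "x0 \<in> S" "\<And>x. x \<in> S \<Longrightarrow> f x0 \<le> f x"
    using continuous_attains_inf[OF assms(1) _ assms(2)] by blast
  with assms(3) show ?thesis by blast
qed (use zero_less_one in blast)

lemma skorokhod_conv_eventually_tau_less:
  assumes "skorokhod_conv fs f" and "tau_lt f < ereal r"
  shows "\<forall>\<^sub>F n in sequentially. tau (fs n) < ereal r"
proof -
  from assms(1) obtain lam where tc: "\<And>n. time_change (lam n)"
    and conv: "\<And>T e. T \<ge> 0 \<Longrightarrow> e > 0 \<Longrightarrow> \<forall>\<^sub>F n in sequentially.
            (\<forall>t\<in>{0..T}. \<bar>lam n t - t\<bar> < e \<and> \<bar>fs n (lam n t) - f t\<bar> < e)"
    unfolding skorokhod_conv_def by blast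
  from assms(2) obtain t1 where t1: "0 \<le> t1" "f t1 < 0" "t1 < r"
    by (auto simp: tau_lt_less_iff)
  show ?thesis
    using conv[of t1 "min (r - t1) (- f t1)"]
  proof (rule eventually_mono; use t1 in simp)
    fix n assume "\<forall>t\<in>{0..t1}. \<bar>lam n t - t\<bar> < r - t1 \<and> \<bar>lam n t - t\<bar> < - f t1
                  \<and> \<bar>fs n (lam n t) - f t\<bar> < r - t1 \<and> \<bar>fs n (lam n t) - f t\<bar> < - f t1"
    then have "lam n t1 < r" "fs n (lam n t1) < 0" using t1 by force+
    moreover have "0 \<le> lam n t1" using time_change_nonneg[OF tc t1(1)] .
    ultimately show "tau (fs n) < ereal r"
      using tau_le[of "lam n t1" "fs n"] by (simp add: le_less_trans)
  qed
qed

lemma skorokhod_conv_eventually_less_tau: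
  assumes "skorokhod_conv fs f" and "continuous_on {0..} f" and "ereal r < tau f"
  shows "\<forall>\<^sub>F n in sequentially. ereal r < tau (fs n)"
proof (cases "r < 0")
  case True
  then have "ereal r < tau (fs n)" for n
    using order_less_le_trans[of "ereal r" 0] tau_nonneg by simp
  then show ?thesis by simp
next
  case False
  from assms(1) obtain lam where tc: "\<And>n. time_change (lam n)"
    and conv: "\<And>T e. T \<ge> 0 \<Longrightarrow> e > 0 \<Longrightarrow> \<forall>\<^sub>F n in sequentially.
            (\<forall>t\<in>{0..T}. \<bar>lam n t - t\<bar> < e \<and> \<bar>fs n (lam n t) - f t\<bar> < e)"
    unfolding skorokhod_conv_def by blast
  from assms(3) obtain m where m: "r < m" "ereal m < tau f"
    using ereal_dense2[of "ereal r"] by auto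
  have "0 < f t" if "t \<in> {0..m}" for t
    using that m(2) by (meson pos_before_tau atLeastAtMost_iff ereal_less_eq(3) le_less_trans)
  moreover have "continuous_on {0..m} f"
    using assms(2) by (rule continuous_on_subset) auto
  ultimately have "\<exists>d>0. \<forall>t\<in>{0..m}. d \<le> f t"
    by (intro continuous_pos_bounded_below) auto
  then obtain d where d: "0 < d" "\<And>t. t \<in> {0..m} \<Longrightarrow> d \<le> f t" by blast
  show ?thesis
    using conv[of m "min (m - r) d"]
  proof (rule eventually_mono; use False m d in simp)
    fix n assume H: "\<forall>t\<in>{0..m}. \<bar>lam n t - t\<bar> < m - r \<and> \<bar>lam n t - t\<bar> < d
                  \<and> \<bar>fs n (lam n t) - f t\<bar> < m - r \<and> \<bar>fs n (lam n t) - f t\<bar> < d"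
    have "0 \<le> m" using False m by simp
    then have "m \<in> {0..m}" by simp
    with H have "\<bar>lam n m - m\<bar> < m - r" by blast
    then have "ereal r < ereal (lam n m)" by simp
    moreover have "ereal (lam n m) \<le> tau (fs n)"
    proof (rule tau_ge)
      fix s assume "0 \<le> s" "s < lam n m"
      then obtain t where t: "0 \<le> t" "t < m" "s = lam n t"
        using time_change_preimage_below[OF tc \<open>0 \<le> s\<close> \<open>0 \<le> m\<close>] by blast
      then have "t \<in> {0..m}" by simp
      with H d(2) have "\<bar>fs n (lam n t) - f t\<bar> < d" and "d \<le> f t" by blast+
      with t(3) show "0 < fs n s" by simp
    qed
    ultimately show "ereal r < tau (fs n)" by (rule less_le_trans)
  qed
qed

theorem lemma3p3:
  fixes fs :: "nat \<Rightarrow> real \<Rightarrow> real" and f :: "real \<Rightarrow> real"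
  assumes "skorokhod_conv fs f"
    and "continuous_on {0..} f"
    and "f \<in> D_star"
  shows "(\<lambda>n. tau (fs n)) \<longlonglongrightarrow> tau f"
proof (rule order_tendstoI)
  fix a assume "a < tau f"
  then obtain r where "a < ereal r" "ereal r < tau f" using ereal_dense2 by blast
  with skorokhod_conv_eventually_less_tau[OF assms(1,2)]
  show "\<forall>\<^sub>F n in sequentially. a < tau (fs n)"
    by (metis (mono_tags, lifting) eventually_mono less_trans)
next
  fix a assume "tau f < a"
  moreover have "tau_lt f = tau f" using assms(3) unfolding D_star_def by auto
  ultimately obtain r where "tau_lt f < ereal r" "ereal r < a" using ereal_dense2 by force
  with skorokhod_conv_eventually_tau_less[OF assms(1)]
  show "\<forall>\<^sub>F n in sequentially. tau (fs n) < a"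
    by (metis (mono_tags, lifting) eventually_mono less_trans)
qed

end
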